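(* Let $(E,\mathscr{T},\le)$ be a $T_2$-preordered Tychonoff space such that, with $\mathcal{F}$ the family of continuous isotone functions $f:E\to[0,1]$, $G(\le)=\bigcap_{f\in\mathcal{F}}G_f$. Let $(\beta E,\mathscr{T}_\beta,\le_\beta)$ be the Stone–Čech compactification $\beta:E\to\beta E$ endowed with the preorder $G(\le_\beta)=\bigcap_{f\in\mathcal{F}}G_{\tilde f}$, where $\tilde f:\beta E\to[0,1]$ is the unique continuous extension of $f\circ\beta^{-1}$. Let $c:E\to cE$ be a Hausdorff $T_2$-preorder compactification $(cE,\mathscr{T}_c,\le_c)$ such that (a) every continuous function $f:E\to[0,1]$ can be extended to a continuous function on $cE$ (i.e. $f\circ c^{-1}$ extends), and (b) every continuous isotone function $f:E\to[0,1]$ can be extended to a continuous isotone function on $(cE,\le_c)$. Then $c$ is equivalent to $\beta:E\to(\beta E,\mathscr{T}_\beta,\le_\beta)$.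
   Context: A topological preordered space is $(E,\mathscr{T},\le)$ with $\le$ a preorder; it is $T_2$-preordered if $G(\le)=\{(x,y):x\le y\}$ is closed in $E\times E$. Isotone: $x\le y\Rightarrow f(x)\le f(y)$. $G_f=\{(x,y):f(x)\le f(y)\}$. A preorder compactification is a preorder embedding (continuous isotone injective map which is a homeomorphism onto its image with isotone inverse for the induced preorder) $c:E\to cE$ into a compact topological preordered space with dense image; Hausdorff $T_2$-preorder compactification: additionally $cE$ Hausdorff and $\le_c$ closed. $c_1\le c_2$ means there is a continuous isotone $C:c_2E\to c_1E$ with $C\circ c_2=c_1$; equivalent means $c_1\le c_2$ and $c_2\le c_1$. *)

theory Defs
  imports "HOL-Analysis.Analysis"
begin

text \<open>Preorders are relations \<open>le :: 'a \<Rightarrow> 'a \<Rightarrow> bool\<close>, relevant only on the carrier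
  (topspace) of the topological space.\<close>

definition preorder_on :: "'a set \<Rightarrow> ('a \<Rightarrow> 'a \<Rightarrow> bool) \<Rightarrow> bool" where
  "preorder_on S le \<longleftrightarrow> (\<forall>x\<in>S. le x x) \<and> (\<forall>x\<in>S. \<forall>y\<in>S. \<forall>z\<in>S. le x y \<longrightarrow> le y z \<longrightarrow> le x z)"

definition graph_rel :: "'a topology \<Rightarrow> ('a \<Rightarrow> 'a \<Rightarrow> bool) \<Rightarrow> ('a \<times> 'a) set" where
  "graph_rel X le = {(x,y). x \<in> topspace X \<and> y \<in> topspace X \<and> le x y}"

definition T2_preordered :: "'a topology \<Rightarrow> ('a \<Rightarrow> 'a \<Rightarrow> bool) \<Rightarrow> bool" where
  "T2_preordered X le \<longleftrightarrow> preorder_on (topspace X) le \<and> closedin (prod_topology X X) (graph_rel X le)"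

definition isotone_on :: "'a set \<Rightarrow> ('a \<Rightarrow> 'a \<Rightarrow> bool) \<Rightarrow> ('b \<Rightarrow> 'b \<Rightarrow> bool) \<Rightarrow> ('a \<Rightarrow> 'b) \<Rightarrow> bool" where
  "isotone_on S le le' f \<longleftrightarrow> (\<forall>x\<in>S. \<forall>y\<in>S. le x y \<longrightarrow> le' (f x) (f y))"

abbreviation unit_itv :: "real topology" where
  "unit_itv \<equiv> top_of_set {0..1}"

definition cont_isotone_fns :: "'a topology \<Rightarrow> ('a \<Rightarrow> 'a \<Rightarrow> bool) \<Rightarrow> ('a \<Rightarrow> real) set" where
  "cont_isotone_fns X le = {f. continuous_map X unit_itv f \<and> isotone_on (topspace X) le (\<le>) f}"

definition Tychonoff_space :: "'a topology \<Rightarrow> bool" where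
  "Tychonoff_space X \<longleftrightarrow> completely_regular_space X \<and> Hausdorff_space X"

definition compactification :: "'a topology \<Rightarrow> 'c topology \<Rightarrow> ('a \<Rightarrow> 'c) \<Rightarrow> bool" where
  "compactification X Y c \<longleftrightarrow> embedding_map X Y c \<and> compact_space Y \<and>
     Y closure_of (c ` topspace X) = topspace Y"

text \<open>Stone--Cech compactification \<open>\<beta> : E \<rightarrow> \<beta>E\<close>, characterized (up to equivalence) as a
  Hausdorff compactification to which every continuous \<open>f : E \<rightarrow> [0,1]\<close> extends continuously.\<close>
definition stone_cech :: "'a topology \<Rightarrow> 'b topology \<Rightarrow> ('a \<Rightarrow> 'b) \<Rightarrow> bool" where
  "stone_cech X B b \<longleftrightarrow> compactification X B b \<and> Hausdorff_space B \<and>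
     (\<forall>f. continuous_map X unit_itv f \<longrightarrow>
        (\<exists>g. continuous_map B unit_itv g \<and> (\<forall>x\<in>topspace X. g (b x) = f x)))"

text \<open>The (unique, for a Stone--Cech compactification) continuous extension \<open>f~\<close> of \<open>f \<circ> \<beta>\<^sup>-\<^sup>1\<close>.\<close>
definition stone_ext :: "'a topology \<Rightarrow> 'b topology \<Rightarrow> ('a \<Rightarrow> 'b) \<Rightarrow> ('a \<Rightarrow> real) \<Rightarrow> ('b \<Rightarrow> real)" where
  "stone_ext X B b f = (SOME g. continuous_map B unit_itv g \<and> (\<forall>x\<in>topspace X. g (b x) = f x))"

definition stone_le :: "'a topology \<Rightarrow> ('a \<Rightarrow> 'a \<Rightarrow> bool) \<Rightarrow> 'b topology \<Rightarrow> ('a \<Rightarrow> 'b) \<Rightarrow> 'b \<Rightarrow> 'b \<Rightarrow> bool" where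
  "stone_le X le B b u v \<longleftrightarrow> u \<in> topspace B \<and> v \<in> topspace B \<and>
     (\<forall>f\<in>cont_isotone_fns X le. stone_ext X B b f u \<le> stone_ext X B b f v)"

definition preorder_embedding ::
  "'a topology \<Rightarrow> ('a \<Rightarrow> 'a \<Rightarrow> bool) \<Rightarrow> 'c topology \<Rightarrow> ('c \<Rightarrow> 'c \<Rightarrow> bool) \<Rightarrow> ('a \<Rightarrow> 'c) \<Rightarrow> bool" where
  "preorder_embedding X le Y le' c \<longleftrightarrow> embedding_map X Y c \<and>
     (\<forall>x\<in>topspace X. \<forall>y\<in>topspace X. le x y \<longleftrightarrow> le' (c x) (c y))"

definition hausdorff_T2_preorder_compactification ::
  "'a topology \<Rightarrow> ('a \<Rightarrow> 'a \<Rightarrow> bool) \<Rightarrow> 'c topology \<Rightarrow> ('c \<Rightarrow> 'c \<Rightarrow> bool) \<Rightarrow> ('a \<Rightarrow> 'c) \<Rightarrow> bool" where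
  "hausdorff_T2_preorder_compactification X le Y le' c \<longleftrightarrow>
     preorder_embedding X le Y le' c \<and> compact_space Y \<and> Hausdorff_space Y \<and>
     T2_preordered Y le' \<and> Y closure_of (c ` topspace X) = topspace Y"

definition compactification_le ::
  "'a topology \<Rightarrow> 'c topology \<Rightarrow> ('c \<Rightarrow> 'c \<Rightarrow> bool) \<Rightarrow> ('a \<Rightarrow> 'c)
    \<Rightarrow> 'd topology \<Rightarrow> ('d \<Rightarrow> 'd \<Rightarrow> bool) \<Rightarrow> ('a \<Rightarrow> 'd) \<Rightarrow> bool" where
  "compactification_le X Y1 le1 c1 Y2 le2 c2 \<longleftrightarrow>
     (\<exists>C. continuous_map Y2 Y1 C \<and> isotone_on (topspace Y2) le2 le1 C \<and>
          (\<forall>x\<in>topspace X. C (c2 x) = c1 x))"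

definition compactification_equiv ::
  "'a topology \<Rightarrow> 'c topology \<Rightarrow> ('c \<Rightarrow> 'c \<Rightarrow> bool) \<Rightarrow> ('a \<Rightarrow> 'c)
    \<Rightarrow> 'd topology \<Rightarrow> ('d \<Rightarrow> 'd \<Rightarrow> bool) \<Rightarrow> ('a \<Rightarrow> 'd) \<Rightarrow> bool" where
  "compactification_equiv X Y1 le1 c1 Y2 le2 c2 \<longleftrightarrow>
     compactification_le X Y1 le1 c1 Y2 le2 c2 \<and> compactification_le X Y2 le2 c2 Y1 le1 c1"

end

theory Submission
  imports Defs
begin

text \<open>Both \<open>\<beta>\<close> and \<open>c\<close> are dense embeddings into compact Hausdorff spaces along which every
  continuous \<open>E \<rightarrow> [0,1]\<close> extends, so the identity of \<open>E\<close> extends to continuous maps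
  \<open>\<beta>E \<rightarrow> cE\<close> and \<open>cE \<rightarrow> \<beta>E\<close> (embed the target in a Tychonoff cube and extend coordinatewise).
  The map \<open>cE \<rightarrow> \<beta>E\<close> is isotone because, by (b) and uniqueness of extensions, \<open>f~\<close> composed
  with it is an isotone function on \<open>cE\<close>. For \<open>\<beta>E \<rightarrow> cE\<close> one needs Nachbin's theorem that the
  closed preorder of a compact Hausdorff space is determined by its continuous isotone functions
  into \<open>[0,1]\<close>; it follows from an isotone Urysohn lemma, obtained by running the dyadic
  construction of Urysohn's lemma through open decreasing sets, which exist by monotone
  normality.\<close>

definition down_closure :: "'a topology \<Rightarrow> ('a \<Rightarrow> 'a \<Rightarrow> bool) \<Rightarrow> 'a set \<Rightarrow> 'a set" where
  "down_closure K R S = {x \<in> topspace K. \<exists>y\<in>S. R x y}"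

definition up_closure :: "'a topology \<Rightarrow> ('a \<Rightarrow> 'a \<Rightarrow> bool) \<Rightarrow> 'a set \<Rightarrow> 'a set" where
  "up_closure K R S = {y \<in> topspace K. \<exists>x\<in>S. R x y}"

definition decreasing_in :: "'a topology \<Rightarrow> ('a \<Rightarrow> 'a \<Rightarrow> bool) \<Rightarrow> 'a set \<Rightarrow> bool" where
  "decreasing_in K R S \<longleftrightarrow> S \<subseteq> topspace K \<and> (\<forall>x\<in>topspace K. \<forall>y\<in>S. R x y \<longrightarrow> x \<in> S)"

definition increasing_in :: "'a topology \<Rightarrow> ('a \<Rightarrow> 'a \<Rightarrow> bool) \<Rightarrow> 'a set \<Rightarrow> bool" where
  "increasing_in K R S \<longleftrightarrow> S \<subseteq> topspace K \<and> (\<forall>x\<in>S. \<forall>y\<in>topspace K. R x y \<longrightarrow> y \<in> S)"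

lemma closedin_down_closure:
  assumes "compact_space K" "closedin (prod_topology K K) (graph_rel K R)" "closedin K S"
  shows "closedin K (down_closure K R S)"
proof -
  have "down_closure K R S = fst ` (graph_rel K R \<inter> (topspace K \<times> S))"
    using closedin_subset[OF assms(3)] by (force simp: down_closure_def graph_rel_def)
  moreover have "closedin (prod_topology K K) (graph_rel K R \<inter> (topspace K \<times> S))"
    using assms by (intro closedin_Int) (auto simp: closedin_prod_Times_iff)
  ultimately show ?thesis
    using closed_map_fst[OF assms(1)] by (metis closed_map_def)
qed

lemma closedin_up_closure:
  assumes "compact_space K" "closedin (prod_topology K K) (graph_rel K R)" "closedin K S"
  shows "closedin K (up_closure K R S)"
proof -
  have "up_closure K R S = snd ` (graph_rel K R \<inter> (S \<times> topspace K))"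
    using closedin_subset[OF assms(3)] by (force simp: up_closure_def graph_rel_def)
  moreover have "closedin (prod_topology K K) (graph_rel K R \<inter> (S \<times> topspace K))"
    using assms by (intro closedin_Int) (auto simp: closedin_prod_Times_iff)
  ultimately show ?thesis
    using closed_map_snd[OF assms(1)] by (metis closed_map_def)
qed

lemma increasing_in_up_closure:
  assumes "preorder_on (topspace K) R" "S \<subseteq> topspace K"
  shows "increasing_in K R (up_closure K R S)"
  unfolding increasing_in_def
proof (intro conjI ballI impI)
  fix y z assume "y \<in> up_closure K R S" "z \<in> topspace K" "R y z"
  then obtain x where "x \<in> S" "R x y" "y \<in> topspace K"
    by (auto simp: up_closure_def)
  with assms \<open>z \<in> topspace K\<close> \<open>R y z\<close> show "z \<in> up_closure K R S"
    unfolding up_closure_def preorder_on_def by blast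
qed (auto simp: up_closure_def)

lemma decreasing_in_Diff_increasing:
  "increasing_in K R S \<Longrightarrow> decreasing_in K R (topspace K - S)"
  unfolding increasing_in_def decreasing_in_def by blast

lemma T2_preordered_decreasing_normal:
  assumes K: "compact_space K" "Hausdorff_space K" "T2_preordered K R"
    and A: "closedin K A" and W: "openin K W" "decreasing_in K R W" and "A \<subseteq> W"
  obtains V where "openin K V" "decreasing_in K R V" "A \<subseteq> V" "K closure_of V \<subseteq> W"
proof -
  have pre: "preorder_on (topspace K) R" and gr: "closedin (prod_topology K K) (graph_rel K R)"
    using K(3) by (auto simp: T2_preordered_def)
  have "down_closure K R A \<subseteq> W"
    using W(2) \<open>A \<subseteq> W\<close> by (auto simp: down_closure_def decreasing_in_def)
  moreover have "closedin K (down_closure K R A)"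
    using closedin_down_closure[OF K(1) gr A] .
  moreover have "normal_space K"
    using K compact_Hausdorff_or_regular_imp_normal_space by blast
  ultimately obtain N where N: "openin K N" "down_closure K R A \<subseteq> N" "K closure_of N \<subseteq> W"
    using W(1) unfolding normal_space_alt by meson
  define V where "V = topspace K - up_closure K R (topspace K - N)"
  show thesis
  proof
    show "openin K V"
      unfolding V_def using closedin_up_closure[OF K(1) gr] N(1) by blast
    show "decreasing_in K R V"
      unfolding V_def by (intro decreasing_in_Diff_increasing increasing_in_up_closure pre) blast
    show "A \<subseteq> V"
      using N(2) closedin_subset[OF A] pre
      unfolding V_def up_closure_def down_closure_def preorder_on_def by blast
    have "V \<subseteq> N"
      using pre unfolding V_def up_closure_def preorder_on_def by blast
    then show "K closure_of V \<subseteq> W"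
      using N(3) closure_of_mono by blast
  qed
qed

lemma dyadics_dense:
  fixes a b :: real
  assumes "0 \<le> a" "a < b"
  obtains r where "r \<in> dyadics" "a < r" "r < b"
proof -
  obtain n q r :: nat
    where "real q / 2^n \<le> a" "a < real r / 2^n" "\<bar>real q / 2^n - real r / 2^n\<bar> < b - a"
    by (rule padic_rational_approximation_straddle_pos_le[of "b - a" 2 a]) (use assms in auto)
  then show thesis
    using that[of "real r / 2^n"] by (auto simp: dyadics_def)
qed

locale dyadic_chain =
  fixes X :: "'a topology" and G :: "real \<Rightarrow> 'a set"
  assumes openin_chain: "r \<in> dyadics \<inter> {0..1} \<Longrightarrow> openin X (G r)"
    and closure_chain: "\<lbrakk>r \<in> dyadics \<inter> {0..1}; s \<in> dyadics \<inter> {0..1}; r < s\<rbrakk>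
      \<Longrightarrow> X closure_of G r \<subseteq> G s"
begin

definition urysohn_fn :: "'a \<Rightarrow> real" where
  "urysohn_fn x = Inf (insert 1 {r \<in> dyadics \<inter> {0..1}. x \<in> G r})"

lemma urysohn_fn_bounds: "0 \<le> urysohn_fn x" "urysohn_fn x \<le> 1"
  unfolding urysohn_fn_def by (force intro: cInf_greatest cInf_lower)+

lemma urysohn_fn_le: "\<lbrakk>r \<in> dyadics \<inter> {0..1}; x \<in> G r\<rbrakk> \<Longrightarrow> urysohn_fn x \<le> r"
  unfolding urysohn_fn_def by (force intro: cInf_lower)

lemma urysohn_fn_ge:
  assumes r: "r \<in> dyadics \<inter> {0..1}" and "x \<notin> G r"
  shows "r \<le> urysohn_fn x"
  unfolding urysohn_fn_def
proof (rule cInf_greatest)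
  fix s assume "s \<in> insert 1 {s \<in> dyadics \<inter> {0..1}. x \<in> G s}"
  moreover have "G s \<subseteq> G r" if "s \<in> dyadics \<inter> {0..1}" "s < r" for s
    using closure_chain[OF that(1) r that(2)]
      closure_of_subset[OF openin_subset[OF openin_chain[OF that(1)]]]
    by blast
  ultimately show "r \<le> s"
    using r \<open>x \<notin> G r\<close> by (force simp: not_less[symmetric])
qed simp

lemma urysohn_fn_mono:
  assumes "\<And>r. r \<in> dyadics \<inter> {0..1} \<Longrightarrow> y \<in> G r \<Longrightarrow> x \<in> G r"
  shows "urysohn_fn x \<le> urysohn_fn y"
  unfolding urysohn_fn_def using assms
  by (intro cInf_superset_mono) (auto intro!: bdd_belowI[of _ 0])

lemma continuous_map_urysohn_fn: "continuous_map X unit_itv urysohn_fn"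
  unfolding continuous_map_upper_lower_semicontinuous_lt_gen
proof (intro conjI allI ballI)
  show "urysohn_fn x \<in> {0..1}" for x
    using urysohn_fn_bounds by simp
  show "openin X {x \<in> topspace X. urysohn_fn x < a}" for a
  proof (subst openin_subopen, intro ballI)
    fix x assume x: "x \<in> {x \<in> topspace X. urysohn_fn x < a}"
    show "\<exists>T. openin X T \<and> x \<in> T \<and> T \<subseteq> {x \<in> topspace X. urysohn_fn x < a}"
    proof (cases "1 < a")
      case True
      then show ?thesis
        using x urysohn_fn_bounds(2) by (intro exI[of _ "topspace X"]) (auto intro: le_less_trans)
    next
      case False
      then obtain r where r: "r \<in> dyadics" "urysohn_fn x < r" "r < a"
        using dyadics_dense[of "urysohn_fn x" a] x urysohn_fn_bounds(1) by auto
      then have r01: "r \<in> dyadics \<inter> {0..1}"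
        using False urysohn_fn_bounds(1)[of x] by auto
      then have "x \<in> G r"
        using urysohn_fn_ge r(2) by force
      moreover have "G r \<subseteq> {x \<in> topspace X. urysohn_fn x < a}"
        using urysohn_fn_le[OF r01] openin_subset[OF openin_chain[OF r01]] r(3) by force
      ultimately show ?thesis
        using openin_chain[OF r01] by blast
    qed
  qed
  show "openin X {x \<in> topspace X. a < urysohn_fn x}" for a
  proof (subst openin_subopen, intro ballI)
    fix x assume x: "x \<in> {x \<in> topspace X. a < urysohn_fn x}"
    show "\<exists>T. openin X T \<and> x \<in> T \<and> T \<subseteq> {x \<in> topspace X. a < urysohn_fn x}"
    proof (cases "a < 0")
      case True
      then show ?thesis
        using x urysohn_fn_bounds(1) by (intro exI[of _ "topspace X"]) (auto intro: less_le_trans)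
    next
      case False
      then obtain r where r: "r \<in> dyadics" "a < r" "r < urysohn_fn x"
        using dyadics_dense[of a "urysohn_fn x"] x by auto
      then obtain s where s: "s \<in> dyadics" "r < s" "s < urysohn_fn x"
        using dyadics_dense[of r "urysohn_fn x"] False by auto
      have r01: "r \<in> dyadics \<inter> {0..1}" and s01: "s \<in> dyadics \<inter> {0..1}"
        using r s False urysohn_fn_bounds(2)[of x] by auto
      have "x \<notin> G s"
        using urysohn_fn_le[OF s01] s(3) by force
      then have "x \<in> topspace X - X closure_of G r"
        using closure_chain[OF r01 s01 s(2)] x by blast
      moreover have "topspace X - X closure_of G r \<subseteq> {x \<in> topspace X. a < urysohn_fn x}"
        using urysohn_fn_ge[OF r01] closure_of_subset[OF openin_subset[OF openin_chain[OF r01]]]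
          r(2)
        by (force intro: less_le_trans)
      ultimately show ?thesis
        by (intro exI[of _ "topspace X - X closure_of G r"]) auto
    qed
  qed
qed

end

lemma isotone_Urysohn_lemma:
  assumes K: "compact_space K" "Hausdorff_space K" "T2_preordered K R"
    and S: "closedin K S" and T: "closedin K T" "increasing_in K R T" and "disjnt S T"
  obtains f where "f \<in> cont_isotone_fns K R" "f ` S \<subseteq> {0}" "f ` T \<subseteq> {1}"
proof -
  let ?W = "topspace K - T"
  have W: "openin K ?W" "decreasing_in K R ?W"
    using T by (auto intro: decreasing_in_Diff_increasing)
  have "S \<subseteq> ?W"
    using \<open>disjnt S T\<close> closedin_subset[OF S] by (auto simp: disjnt_def)
  then obtain U where U: "openin K U" "decreasing_in K R U" "S \<subseteq> U" "K closure_of U \<subseteq> ?W"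
    using T2_preordered_decreasing_normal[OF K S W] by blast
  let ?Rel = "\<lambda>V V'. openin K V \<and> decreasing_in K R V \<and> openin K V' \<and> decreasing_in K R V'
    \<and> K closure_of V \<subseteq> V'"
  have "\<exists>G :: real \<Rightarrow> _. G 0 = U \<and> G 1 = ?W \<and>
      (\<forall>r \<in> dyadics \<inter> {0..1}. \<forall>s \<in> dyadics \<inter> {0..1}. r < s \<longrightarrow> ?Rel (G r) (G s))"
  proof (rule recursion_on_dyadic_fractions)
    show "?Rel U ?W"
      using U W by blast
    show "\<exists>V''. ?Rel V V'' \<and> ?Rel V'' V'" if VV': "?Rel V V'" for V V'
    proof -
      obtain V'' where "openin K V''" "decreasing_in K R V''" "K closure_of V \<subseteq> V''"
          "K closure_of V'' \<subseteq> V'"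
      proof (rule T2_preordered_decreasing_normal[OF K closedin_closure_of])
        show "openin K V'" "decreasing_in K R V'" "K closure_of V \<subseteq> V'"
          using VV' by auto
      qed
      with VV' show ?thesis
        by blast
    qed
    show "?Rel V V''" if "?Rel V V'" "?Rel V' V''" for V V' V''
      using that closure_of_subset[OF openin_subset, of K V'] by blast
  qed
  then obtain G :: "real \<Rightarrow> 'a set" where G0: "G 0 = U" and G1: "G 1 = ?W"
    and G: "\<And>r s. \<lbrakk>r \<in> dyadics \<inter> {0..1}; s \<in> dyadics \<inter> {0..1}; r < s\<rbrakk>
      \<Longrightarrow> ?Rel (G r) (G s)"
    by blast
  have zero_one: "0 \<in> dyadics \<inter> {0..1::real}" "1 \<in> dyadics \<inter> {0..1::real}"
    by (force simp: dyadics_def)+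
  have Gr: "openin K (G r) \<and> decreasing_in K R (G r)" if "r \<in> dyadics \<inter> {0..1}" for r
    using G[OF that zero_one(2)] G[OF zero_one(1) that] that by (cases "r < 1") auto
  interpret dyadic_chain K G
    by unfold_locales (use Gr G in blast)+
  show thesis
  proof
    show "urysohn_fn \<in> cont_isotone_fns K R"
      unfolding cont_isotone_fns_def isotone_on_def
    proof (intro CollectI conjI ballI impI continuous_map_urysohn_fn urysohn_fn_mono)
      show "x \<in> G r" if "x \<in> topspace K" "R x y" "r \<in> dyadics \<inter> {0..1}" "y \<in> G r" for x y r
        using Gr[OF that(3)] that by (auto simp: decreasing_in_def)
    qed
    show "urysohn_fn ` S \<subseteq> {0}"
      using urysohn_fn_le[OF zero_one(1)] urysohn_fn_bounds(1) \<open>S \<subseteq> U\<close> G0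
      by (auto intro!: order_antisym)
    show "urysohn_fn ` T \<subseteq> {1}"
      using urysohn_fn_ge[OF zero_one(2)] urysohn_fn_bounds(2) G1 by (auto intro!: order_antisym)
  qed
qed

theorem T2_preordered_le_iff_cont_isotone:
  assumes K: "compact_space K" "Hausdorff_space K" "T2_preordered K R"
    and pq: "p \<in> topspace K" "q \<in> topspace K"
  shows "R p q \<longleftrightarrow> (\<forall>f\<in>cont_isotone_fns K R. f p \<le> f q)"
proof
  show "\<forall>f\<in>cont_isotone_fns K R. f p \<le> f q" if "R p q"
    using that pq by (auto simp: cont_isotone_fns_def isotone_on_def)
next
  assume le: "\<forall>f\<in>cont_isotone_fns K R. f p \<le> f q"
  show "R p q"
  proof (rule ccontr)
    assume "\<not> R p q"
    have pre: "preorder_on (topspace K) R" and gr: "closedin (prod_topology K K) (graph_rel K R)"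
      using K(3) by (auto simp: T2_preordered_def)
    have "closedin K (up_closure K R {p})"
      using closedin_up_closure[OF K(1) gr] closedin_Hausdorff_singleton[OF K(2) pq(1)] .
    moreover have "disjnt {q} (up_closure K R {p})"
      using \<open>\<not> R p q\<close> by (simp add: up_closure_def)
    moreover have "increasing_in K R (up_closure K R {p})"
      using increasing_in_up_closure[OF pre] pq(1) by blast
    ultimately obtain f
      where "f \<in> cont_isotone_fns K R" "f ` {q} \<subseteq> {0}" "f ` up_closure K R {p} \<subseteq> {1}"
      using isotone_Urysohn_lemma[OF K closedin_Hausdorff_singleton[OF K(2) pq(2)]] by blast
    moreover have "p \<in> up_closure K R {p}"
      using pre pq(1) by (simp add: up_closure_def preorder_on_def)
    ultimately show False
      using le by fastforce
  qed
qed

lemma embedding_map_imp_continuous_map: "embedding_map X Y f \<Longrightarrow> continuous_map X Y f"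
  unfolding embedding_map_def
  by (meson homeomorphic_imp_continuous_map continuous_map_in_subtopology)

lemma continuous_map_extension_into_compact:
  fixes X :: "'a topology" and B :: "'b topology" and K :: "'c topology"
  assumes dense: "B closure_of (b ` topspace X) = topspace B"
    and ext: "\<forall>f. continuous_map X unit_itv f \<longrightarrow>
      (\<exists>g. continuous_map B unit_itv g \<and> (\<forall>x\<in>topspace X. g (b x) = f x))"
    and K: "compact_space K" "Hausdorff_space K" and c: "continuous_map X K c"
  obtains C where "continuous_map B K C" "\<forall>x\<in>topspace X. C (b x) = c x"
proof -
  have "completely_regular_space K"
    using K compact_Hausdorff_or_regular_imp_normal_space normal_imp_completely_regular_space
    by blast
  then obtain I :: "('c \<Rightarrow> real) set" and e
    where e: "embedding_map K (product_topology (\<lambda>_. unit_itv) I) e"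
    by (rule completely_regular_space_cube_embedding[OF _ K(2)])
  define P where "P = product_topology (\<lambda>_. unit_itv) I"
  obtain e' where e': "homeomorphic_maps K (subtopology P (e ` topspace K)) e e'"
    using e by (auto simp: P_def embedding_map_def homeomorphic_map_maps)
  then have cont_e: "continuous_map K P e"
    by (auto simp: homeomorphic_maps_def continuous_map_in_subtopology)
  have "\<forall>i\<in>I. \<exists>h. continuous_map B unit_itv h \<and> (\<forall>x\<in>topspace X. h (b x) = e (c x) i)"
  proof
    fix i assume "i \<in> I"
    then have "continuous_map X unit_itv (\<lambda>x. e (c x) i)"
      using continuous_map_compose[OF c cont_e]
      by (simp add: P_def continuous_map_componentwise o_def)
    then show "\<exists>h. continuous_map B unit_itv h \<and> (\<forall>x\<in>topspace X. h (b x) = e (c x) i)"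
      using ext by blast
  qed
  then obtain h where h: "\<And>i. i \<in> I \<Longrightarrow> continuous_map B unit_itv (h i)"
    "\<And>i x. i \<in> I \<Longrightarrow> x \<in> topspace X \<Longrightarrow> h i (b x) = e (c x) i"
    by metis
  define H where "H u = (\<lambda>i\<in>I. h i u)" for u
  have cont_H: "continuous_map B P H"
    by (auto simp: P_def H_def continuous_map_componentwise h(1))
  have H_b: "H (b x) = e (c x)" if "x \<in> topspace X" for x
  proof -
    have "e (c x) \<in> topspace P"
      using that c cont_e by (meson continuous_map_image_subset_topspace image_subset_iff)
    then show ?thesis
      using that h(2) by (auto simp: H_def P_def PiE_iff intro!: extensionalityI[of _ I])
  qed
  have "closedin P (e ` topspace K)"
    using compactin_imp_closedin image_compactin[OF _ cont_e] K(1)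
      Hausdorff_space_product_topology Hausdorff_space_subtopology[OF Hausdorff_space_euclidean]
    by (metis P_def compact_space_def)
  then have "P closure_of (e ` c ` topspace X) \<subseteq> e ` topspace K"
    using c by (intro closure_of_minimal) (auto simp: continuous_map_def)
  moreover have "H ` topspace B \<subseteq> P closure_of (H ` b ` topspace X)"
    using continuous_map_image_closure_subset[OF cont_H] dense by metis
  ultimately have H_range: "H ` topspace B \<subseteq> e ` topspace K"
    using H_b by (simp add: image_image)
  show thesis
  proof
    show "continuous_map B K (e' \<circ> H)"
      using e' cont_H H_range
      by (intro continuous_map_compose[of _ "subtopology P (e ` topspace K)"])
        (auto simp: homeomorphic_maps_def continuous_map_in_subtopology)
    show "\<forall>x\<in>topspace X. (e' \<circ> H) (b x) = c x"
      using e' H_b c by (auto simp: homeomorphic_maps_def continuous_map_def)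
  qed
qed

lemma stone_ext_extends:
  assumes "stone_cech X B b" "continuous_map X unit_itv f"
  shows "continuous_map B unit_itv (stone_ext X B b f)"
    and "\<forall>x\<in>topspace X. stone_ext X B b f (b x) = f x"
proof -
  have "\<exists>g. continuous_map B unit_itv g \<and> (\<forall>x\<in>topspace X. g (b x) = f x)"
    using assms by (auto simp: stone_cech_def)
  then have "continuous_map B unit_itv (stone_ext X B b f) \<and>
      (\<forall>x\<in>topspace X. stone_ext X B b f (b x) = f x)"
    unfolding stone_ext_def by (rule someI_ex)
  then show "continuous_map B unit_itv (stone_ext X B b f)"
    and "\<forall>x\<in>topspace X. stone_ext X B b f (b x) = f x"
    by auto
qed

lemma cont_isotone_fns_compose:
  assumes "g \<in> cont_isotone_fns Y R'" "continuous_map X Y c" "isotone_on (topspace X) R R' c"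
  shows "g \<circ> c \<in> cont_isotone_fns X R"
proof -
  have "continuous_map X unit_itv (g \<circ> c)"
    using assms(1,2) continuous_map_compose by (auto simp: cont_isotone_fns_def)
  moreover have "c x \<in> topspace Y" if "x \<in> topspace X" for x
    using assms(2) that by (meson continuous_map_image_subset_topspace image_subset_iff)
  ultimately show ?thesis
    using assms(1,3) by (auto simp: cont_isotone_fns_def isotone_on_def)
qed

lemma unit_itv_maps_eq_on_dense_image:
  assumes "Y closure_of (c ` topspace X) = topspace Y"
    "continuous_map Y unit_itv g" "continuous_map Y unit_itv h"
    "\<forall>x\<in>topspace X. g (c x) = h (c x)" "u \<in> topspace Y"
  shows "g u = h u"
proof (rule forall_in_closure_of_eq[of u Y "c ` topspace X" unit_itv])
  show "Hausdorff_space unit_itv"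
    by (rule Hausdorff_space_subtopology[OF Hausdorff_space_euclidean])
qed (use assms in auto)

lemma isotone_on_extension_from_stone_cech:
  assumes b: "stone_cech E BE b"
    and CE: "compact_space CE" "Hausdorff_space CE" "T2_preordered CE lec"
    and c: "continuous_map E CE c" "isotone_on (topspace E) le lec c"
    and C: "continuous_map BE CE C" "\<forall>x\<in>topspace E. C (b x) = c x"
  shows "isotone_on (topspace BE) (stone_le E le BE b) lec C"
  unfolding isotone_on_def
proof (intro ballI impI)
  fix u v assume uv: "u \<in> topspace BE" "v \<in> topspace BE" "stone_le E le BE b u v"
  have "g (C u) \<le> g (C v)" if g: "g \<in> cont_isotone_fns CE lec" for g
  proof -
    have gc: "g \<circ> c \<in> cont_isotone_fns E le"
      using cont_isotone_fns_compose[OF g c] .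
    then have ext: "continuous_map BE unit_itv (stone_ext E BE b (g \<circ> c))"
        "\<forall>x\<in>topspace E. stone_ext E BE b (g \<circ> c) (b x) = g (C (b x))"
      using stone_ext_extends[OF b] C(2) by (auto simp: cont_isotone_fns_def)
    have gC: "continuous_map BE unit_itv (g \<circ> C)"
      using C(1) g continuous_map_compose by (auto simp: cont_isotone_fns_def)
    have dense: "BE closure_of (b ` topspace E) = topspace BE"
      using b by (simp add: stone_cech_def compactification_def)
    have "stone_ext E BE b (g \<circ> c) w = g (C w)" if "w \<in> topspace BE" for w
      using unit_itv_maps_eq_on_dense_image[OF dense ext(1) gC _ that] ext(2) by simp
    then show ?thesis
      using uv gc by (auto simp: stone_le_def)
  qed
  then show "lec (C u) (C v)"
    using T2_preordered_le_iff_cont_isotone[OF CE] C(1) uv(1,2)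
    by (meson continuous_map_image_subset_topspace image_subset_iff)
qed

lemma isotone_on_extension_into_stone_cech:
  assumes b: "stone_cech E BE b"
    and dense: "CE closure_of (c ` topspace E) = topspace CE"
    and C: "continuous_map CE BE C" "\<forall>x\<in>topspace E. C (c x) = b x"
    and ext: "\<forall>f\<in>cont_isotone_fns E le.
      \<exists>g\<in>cont_isotone_fns CE lec. \<forall>x\<in>topspace E. g (c x) = f x"
  shows "isotone_on (topspace CE) lec (stone_le E le BE b) C"
  unfolding isotone_on_def
proof (intro ballI impI)
  fix u v assume uv: "u \<in> topspace CE" "v \<in> topspace CE" "lec u v"
  have "stone_ext E BE b f (C u) \<le> stone_ext E BE b f (C v)"
    if f: "f \<in> cont_isotone_fns E le" for f
  proof -
    obtain g where g: "g \<in> cont_isotone_fns CE lec" "\<forall>x\<in>topspace E. g (c x) = f x"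
      using ext f by blast
    have "continuous_map E unit_itv f"
      using f by (simp add: cont_isotone_fns_def)
    then have fC: "continuous_map CE unit_itv (stone_ext E BE b f \<circ> C)"
        and agree: "\<forall>x\<in>topspace E. g (c x) = (stone_ext E BE b f \<circ> C) (c x)"
      using continuous_map_compose[OF C(1) stone_ext_extends(1)[OF b]]
        stone_ext_extends(2)[OF b] C(2) g(2)
      by auto
    have "continuous_map CE unit_itv g"
      using g(1) by (simp add: cont_isotone_fns_def)
    then have "g w = stone_ext E BE b f (C w)" if "w \<in> topspace CE" for w
      using unit_itv_maps_eq_on_dense_image[OF dense _ fC agree that] by simp
    then show ?thesis
      using g(1) uv by (auto simp: cont_isotone_fns_def isotone_on_def)
  qed
  moreover have "C u \<in> topspace BE" "C v \<in> topspace BE"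
    using C(1) uv by (auto dest: continuous_map_image_subset_topspace)
  ultimately show "stone_le E le BE b (C u) (C v)"
    by (simp add: stone_le_def)
qed

theorem mainTheorem5:
  fixes E :: "'a topology" and le :: "'a \<Rightarrow> 'a \<Rightarrow> bool"
    and BE :: "'b topology" and b :: "'a \<Rightarrow> 'b"
    and CE :: "'c topology" and lec :: "'c \<Rightarrow> 'c \<Rightarrow> bool" and c :: "'a \<Rightarrow> 'c"
  assumes "Tychonoff_space E"
    and "T2_preordered E le"
    and "\<forall>x\<in>topspace E. \<forall>y\<in>topspace E.
           le x y \<longleftrightarrow> (\<forall>f\<in>cont_isotone_fns E le. f x \<le> f y)"
    and "stone_cech E BE b"
    and "hausdorff_T2_preorder_compactification E le CE lec c"
    and "\<forall>f. continuous_map E unit_itv f \<longrightarrow>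
           (\<exists>g. continuous_map CE unit_itv g \<and> (\<forall>x\<in>topspace E. g (c x) = f x))"
    and "\<forall>f\<in>cont_isotone_fns E le.
           (\<exists>g\<in>cont_isotone_fns CE lec. \<forall>x\<in>topspace E. g (c x) = f x)"
  shows "compactification_equiv E CE lec c BE (stone_le E le BE b) b"
proof -
  \<comment> \<open>The first three hypotheses only serve, in the paper, to make \<open>\<le>\<^sub>\<beta>\<close> a preorder
    compactification; the equivalence itself does not need them.\<close>
  have CE: "compact_space CE" "Hausdorff_space CE" "T2_preordered CE lec"
    and CE_dense: "CE closure_of (c ` topspace E) = topspace CE"
    and c: "continuous_map E CE c" "isotone_on (topspace E) le lec c"
    using assms(5) embedding_map_imp_continuous_map
    by (auto simp: hausdorff_T2_preorder_compactification_def preorder_embedding_def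
        isotone_on_def)
  have BE: "compact_space BE" "Hausdorff_space BE"
    and BE_dense: "BE closure_of (b ` topspace E) = topspace BE"
    and b: "continuous_map E BE b"
    using assms(4) embedding_map_imp_continuous_map
    by (auto simp: stone_cech_def compactification_def)
  obtain C1 where C1: "continuous_map BE CE C1" "\<forall>x\<in>topspace E. C1 (b x) = c x"
    using continuous_map_extension_into_compact[OF BE_dense _ CE(1,2) c(1)] assms(4)
    by (auto simp: stone_cech_def)
  obtain C2 where C2: "continuous_map CE BE C2" "\<forall>x\<in>topspace E. C2 (c x) = b x"
    using continuous_map_extension_into_compact[OF CE_dense assms(6) BE b] by blast
  show ?thesis
    unfolding compactification_equiv_def compactification_le_def
    using C1 isotone_on_extension_from_stone_cech[OF assms(4) CE c C1]
      C2 isotone_on_extension_into_stone_cech[OF assms(4) CE_dense C2 assms(7)]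
    by blast
qed

end
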